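(* Let $n\ge1$, $\sigma>0$, $\alpha\in(0,1)$, and $\boldsymbol\mu\in\mathcal S_n^\cup$. Observe $\mathbf y=\boldsymbol\mu+\boldsymbol\xi$ with $\boldsymbol\xi\sim\mathcal N(\mathbf 0,\sigma^2I_{n\times n})$. Let $\hat{\boldsymbol\mu}=\Pi_{\mathcal S_n^\cup}(\mathbf y)$ be the least squares estimator over $\mathcal S_n^\cup$, $\hat q=q(\hat{\boldsymbol\mu})$, and $$\hat r_\cup=\frac{\sigma^2\hat q\,\big(20+40\log n+10\log(1/\alpha)\big)}{n}.$$ Then with probability at least $1-\alpha$, $$\frac1n\sum_{i=1}^n(\hat\mu_i-\mu_i)^2\le\hat r_\cup .$$
   Context: For $n\ge3$, $\mathcal S_n^\cup=\{\mathbf u\in\mathbb R^n: 2u_i\le u_{i+1}+u_{i-1},\ i=2,\dots,n-1\}$ (convex sequences); $\mathcal S_1^\cup=\mathbb R$, $\mathcal S_2^\cup=\mathbb R^2$. $\Pi_{\mathcal S_n^\cup}$ is the Euclidean projection onto $\mathcal S_n^\cup$. For $\mathbf u\in\mathcal S_n^\cup$, $q(\mathbf u)-1$ is the number of strict inequalities among $2u_i\le u_{i+1}+u_{i-1}$, $i=2,\dots,n-1$; equivalently $q(\mathbf u)$ is the smallest number of affine pieces of $\mathbf u$. *)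

theory Defs
  imports "HOL-Probability.Probability"
begin

text \<open>Vectors in R^n are functions nat => real, coordinates indexed by 1..n.\<close>

definition convex_seqs :: "nat \<Rightarrow> (nat \<Rightarrow> real) set" where
  "convex_seqs n = {u. \<forall>i\<in>{2..n-1}. 2 * u i \<le> u (i+1) + u (i-1)}"

definition sqdist_n :: "nat \<Rightarrow> (nat \<Rightarrow> real) \<Rightarrow> (nat \<Rightarrow> real) \<Rightarrow> real" where
  "sqdist_n n u v = (\<Sum>i=1..n. (u i - v i)^2)"

definition proj_convex :: "nat \<Rightarrow> (nat \<Rightarrow> real) \<Rightarrow> (nat \<Rightarrow> real)" where
  "proj_convex n y = (THE u. u \<in> extensional {1..n} \<and> u \<in> convex_seqs n \<and>
      (\<forall>v\<in>convex_seqs n. sqdist_n n y u \<le> sqdist_n n y v))"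

definition q_pieces :: "nat \<Rightarrow> (nat \<Rightarrow> real) \<Rightarrow> nat" where
  "q_pieces n u = 1 + card {i\<in>{2..n-1}. 2 * u i < u (i+1) + u (i-1)}"

definition gauss_vec :: "nat \<Rightarrow> real \<Rightarrow> (nat \<Rightarrow> real) measure" where
  "gauss_vec n \<sigma> = PiM {1..n} (\<lambda>_. density lborel (normal_density 0 \<sigma>))"

end

theory Submission
  imports Defs
begin

text \<open>
  Write \<open>p\<close> for the least squares estimate and \<open>T\<close> for its set of kinks, so that \<open>q(p) = |T| + 1\<close>.
  Minimality of \<open>p\<close> gives the basic inequality \<open>\<parallel>p - \<mu>\<parallel>\<^sup>2 \<le> \<langle>\<xi>, p - \<mu>\<rangle>\<close>. The sequence \<open>p\<close> is
  affine on each of the \<open>|T| + 1\<close> blocks into which \<open>T\<close> cuts \<open>{1..n}\<close>; let \<open>m\<close> be the blockwise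
  affine least squares fit of \<open>\<mu>\<close>. Then \<open>p - m\<close> is blockwise affine and orthogonal to \<open>\<mu> - m\<close>, and
  Cauchy-Schwarz in both parts yields \<open>\<parallel>p - \<mu>\<parallel>\<^sup>2 \<le> Q\<^sub>T(\<xi>) + R\<^sub>T(\<xi>)\<close>: \<open>Q\<^sub>T\<close> sums the squared
  projections of \<open>\<xi>\<close> onto the constants and onto the centred indices of every block, \<open>R\<^sub>T\<close> is the
  squared projection of \<open>\<xi>\<close> onto \<open>\<mu> - m\<close>. Every squared projection of a Gaussian vector is
  \<open>\<sigma>\<^sup>2 \<chi>\<^sup>2\<^sub>1\<close>, and the blocks are independent, so \<open>exp (Q\<^sub>T / (5\<sigma>\<^sup>2))\<close> and \<open>exp (R\<^sub>T / (5\<sigma>\<^sup>2))\<close>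
  have expectation at most \<open>\<surd>5\<^bsup>|T|+1\<^esup>\<close>. A Chernoff bound for each of the \<open>2\<^bsup>n-2\<^esup>\<close> candidate sets
  \<open>T \<subseteq> {2..n-1}\<close> and a union bound finish the proof; the \<open>log n\<close> term pays for the union.
\<close>

section \<open>The projection onto convex sequences\<close>

definition is_proj_convex :: "nat \<Rightarrow> (nat \<Rightarrow> real) \<Rightarrow> (nat \<Rightarrow> real) \<Rightarrow> bool" where
  "is_proj_convex n y u \<longleftrightarrow> u \<in> extensional {1..n} \<and> u \<in> convex_seqs n \<and>
     (\<forall>v\<in>convex_seqs n. sqdist_n n y u \<le> sqdist_n n y v)"

lemma proj_convex_eq_The: "proj_convex n y = (THE u. is_proj_convex n y u)"
  unfolding proj_convex_def is_proj_convex_def ..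

lemma convex_seqs_segment:
  assumes "u \<in> convex_seqs n" "v \<in> convex_seqs n" "0 \<le> t" "t \<le> 1"
  shows "(\<lambda>i. u i + t * (v i - u i)) \<in> convex_seqs n"
proof -
  { fix i assume i: "i \<in> {2..n-1}"
    have "2 * u i \<le> u (i+1) + u (i-1)" "2 * v i \<le> v (i+1) + v (i-1)"
      using assms i by (auto simp: convex_seqs_def)
    then have "(1-t) * (2 * u i) + t * (2 * v i) \<le> (1-t) * (u (i+1) + u (i-1)) + t * (v (i+1) + v (i-1))"
      using assms by (intro add_mono mult_left_mono) auto
    then have "2 * (u i + t * (v i - u i)) \<le>
        (u (i+1) + t * (v (i+1) - u (i+1))) + (u (i-1) + t * (v (i-1) - u (i-1)))"
      by (simp add: algebra_simps) }
  then show ?thesis by (auto simp: convex_seqs_def)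
qed

lemma restrict_in_convex_seqs: "v \<in> convex_seqs n \<Longrightarrow> restrict v {1..n} \<in> convex_seqs n"
  unfolding convex_seqs_def by auto

lemma sqdist_n_restrict: "sqdist_n n y (restrict v {1..n}) = sqdist_n n y v"
  unfolding sqdist_n_def by simp

lemma closed_convex_seqs: "closed (convex_seqs n)"
proof -
  have "convex_seqs n = (\<Inter>i\<in>{2..n-1}. {u. 2 * u i \<le> u (i+1) + u (i-1)})"
    by (auto simp: convex_seqs_def)
  moreover have "closed {u::nat\<Rightarrow>real. 2 * u i \<le> u (i+1) + u (i-1)}" for i
    by (intro closed_Collect_le continuous_intros continuous_on_product_coordinates)
  ultimately show ?thesis by auto
qed

lemma continuous_on_sqdist_n: "continuous_on UNIV (sqdist_n n y)"
  unfolding sqdist_n_def by (intro continuous_intros continuous_on_product_coordinates)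

lemma abs_le_of_sqdist_n_le:
  assumes "sqdist_n n y v \<le> S" "i \<in> {1..n}"
  shows "\<bar>v i\<bar> \<le> (\<Sum>j=1..n. \<bar>y j\<bar>) + sqrt S"
proof -
  have "(y i - v i)\<^sup>2 \<le> sqdist_n n y v"
    unfolding sqdist_n_def using assms(2) by (intro member_le_sum) auto
  then have "\<bar>y i - v i\<bar> \<le> sqrt S"
    using assms(1) by (metis order_trans real_sqrt_abs real_sqrt_le_mono)
  moreover have "\<bar>y i\<bar> \<le> (\<Sum>j=1..n. \<bar>y j\<bar>)"
    using assms(2) by (intro member_le_sum) auto
  ultimately show ?thesis by linarith
qed

text \<open>
  A minimiser over the compact set of convex sequences with coordinates in \<open>[-R, R]\<close> is a global
  one, because every convex sequence closer to \<open>y\<close> than \<open>0\<close> has its coordinates in \<open>[-R, R]\<close>.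
\<close>
lemma proj_convex_exists: "\<exists>u. is_proj_convex n y u"
proof -
  define S where "S = sqdist_n n y (restrict (\<lambda>_. 0) {1..n})"
  define R where "R = (\<Sum>i=1..n. \<bar>y i\<bar>) + sqrt S"
  define C where "C = PiE UNIV (\<lambda>i. if i \<in> {1..n} then {-R..R} else {undefined}) \<inter> convex_seqs n"
  have "compactin (product_topology (\<lambda>_. euclidean) UNIV)
      (PiE UNIV (\<lambda>i. if i \<in> {1..n} then {-R..R} else {undefined}))"
    unfolding compactin_PiE by auto
  then have "compact C"
    unfolding C_def using closed_convex_seqs by (auto simp: euclidean_product_topology)
  have small_in_C: "restrict v {1..n} \<in> C" if "v \<in> convex_seqs n" "sqdist_n n y v \<le> S" for v
  proof -
    have "v i \<in> {-R..R}" if "i \<in> {1..n}" for i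
      using abs_le_of_sqdist_n_le[OF \<open>sqdist_n n y v \<le> S\<close> that] unfolding R_def by auto
    then show ?thesis using that restrict_in_convex_seqs by (auto simp: C_def PiE_iff)
  qed
  have "restrict (\<lambda>_. 0) {1..n} \<in> convex_seqs n"
    unfolding convex_seqs_def by auto
  then have zero_in_C: "restrict (\<lambda>_. 0) {1..n} \<in> C"
    using small_in_C[of "restrict (\<lambda>_. 0) {1..n}"] by (simp add: S_def sqdist_n_restrict)
  obtain u where uC: "u \<in> C" and umin: "\<forall>v\<in>C. sqdist_n n y u \<le> sqdist_n n y v"
    using continuous_attains_inf[OF \<open>compact C\<close> _ continuous_on_subset[OF continuous_on_sqdist_n]]
      zero_in_C by blast
  have "sqdist_n n y u \<le> sqdist_n n y v" if "v \<in> convex_seqs n" for v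
  proof (cases "sqdist_n n y v \<le> S")
    case True
    then show ?thesis using umin small_in_C[OF that] by (metis sqdist_n_restrict)
  next
    case False
    then show ?thesis using umin zero_in_C by (fastforce simp: S_def)
  qed
  moreover have "u \<in> extensional {1..n}"
    using uC unfolding C_def by (auto simp: PiE_iff extensional_def split: if_splits)
  ultimately show ?thesis
    using uC unfolding is_proj_convex_def C_def by blast
qed

lemma sqdist_n_segment:
  "sqdist_n n y (\<lambda>i. u i + t * (v i - u i)) = sqdist_n n y u
     - 2 * t * (\<Sum>i=1..n. (y i - u i) * (v i - u i)) + t\<^sup>2 * (\<Sum>i=1..n. (v i - u i)\<^sup>2)"
  unfolding sqdist_n_def
  by (simp add: sum_distrib_left sum_subtractf[symmetric] sum.distrib[symmetric]
      power2_eq_square algebra_simps)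

lemma is_proj_convex_variational_ineq:
  assumes "is_proj_convex n y u" "v \<in> convex_seqs n"
  shows "(\<Sum>i=1..n. (y i - u i) * (v i - u i)) \<le> 0"
proof (rule ccontr)
  define a where "a = (\<Sum>i=1..n. (y i - u i) * (v i - u i))"
  define b where "b = (\<Sum>i=1..n. (v i - u i)\<^sup>2)"
  assume "\<not> a \<le> 0"
  have "0 \<le> b" unfolding b_def by (auto intro: sum_nonneg)
  have step: "2 * a \<le> t * b" if "0 < t" "t \<le> 1" for t
  proof -
    have "sqdist_n n y u \<le> sqdist_n n y (\<lambda>i. u i + t * (v i - u i))"
      using assms convex_seqs_segment[of u n v t] that unfolding is_proj_convex_def by auto
    then have "t * (2 * a) \<le> t * (t * b)"
      unfolding sqdist_n_segment a_def b_def by (simp add: power2_eq_square algebra_simps)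
    then show ?thesis using that by simp
  qed
  show False
  proof (cases "b \<le> a")
    case True then show False using step[of 1] \<open>\<not> a \<le> 0\<close> by simp
  next
    case False then show False using step[of "a/b"] \<open>\<not> a \<le> 0\<close> by simp
  qed
qed

lemma is_proj_convex_unique:
  assumes "is_proj_convex n y u" "is_proj_convex n y u'"
  shows "u = u'"
proof (rule extensionalityI)
  have "(\<Sum>i=1..n. (y i - u i) * (u' i - u i) + (y i - u' i) * (u i - u' i)) \<le> 0"
    using is_proj_convex_variational_ineq[OF assms(1), of u'] is_proj_convex_variational_ineq[OF assms(2), of u]
      assms unfolding is_proj_convex_def by (simp add: sum.distrib)
  moreover have "(y i - u i) * (u' i - u i) + (y i - u' i) * (u i - u' i) = (u i - u' i)\<^sup>2" for i
    by (simp add: power2_eq_square algebra_simps)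
  ultimately have "(\<Sum>i=1..n. (u i - u' i)\<^sup>2) = 0"
    by (simp add: antisym sum_nonneg)
  then show "u i = u' i" if "i \<in> {1..n}" for i
    using that by (simp add: sum_nonneg_eq_0_iff)
qed (use assms in \<open>auto simp: is_proj_convex_def\<close>)

lemma is_proj_convex_proj_convex: "is_proj_convex n y (proj_convex n y)"
proof -
  have "\<exists>!u. is_proj_convex n y u"
    using proj_convex_exists is_proj_convex_unique by (rule ex_ex1I)
  then show ?thesis unfolding proj_convex_eq_The by (rule theI')
qed

lemma proj_convex_in_convex_seqs: "proj_convex n y \<in> convex_seqs n"
  using is_proj_convex_proj_convex unfolding is_proj_convex_def by blast

lemma proj_convex_variational_ineq:
  "v \<in> convex_seqs n \<Longrightarrow> (\<Sum>i=1..n. (y i - proj_convex n y i) * (v i - proj_convex n y i)) \<le> 0"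
  by (rule is_proj_convex_variational_ineq[OF is_proj_convex_proj_convex])

lemma proj_convex_nonexpansive:
  "(\<Sum>i=1..n. (proj_convex n y i - proj_convex n y' i)\<^sup>2) \<le> (\<Sum>i=1..n. (y i - y' i)\<^sup>2)"
proof -
  define p where "p = proj_convex n y"
  define p' where "p' = proj_convex n y'"
  have "(\<Sum>i=1..n. (y i - p i) * (p' i - p i) + (y' i - p' i) * (p i - p' i)) \<le> 0"
    using proj_convex_variational_ineq[of "proj_convex n y'" n y]
      proj_convex_variational_ineq[of "proj_convex n y" n y']
    unfolding p_def p'_def by (simp add: proj_convex_in_convex_seqs sum.distrib)
  moreover have "(p i - p' i)\<^sup>2 / 2 - (y i - y' i)\<^sup>2 / 2 \<le>
      (y i - p i) * (p' i - p i) + (y' i - p' i) * (p i - p' i)" for i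
  proof -
    have "(y i - p i) * (p' i - p i) + (y' i - p' i) * (p i - p' i)
        = (p i - p' i)\<^sup>2 - (p i - p' i) * (y i - y' i)"
      by (simp add: power2_eq_square algebra_simps)
    moreover have "2 * ((p i - p' i) * (y i - y' i)) \<le> (p i - p' i)\<^sup>2 + (y i - y' i)\<^sup>2"
      using zero_le_power2[of "(y i - y' i) - (p i - p' i)"] by (simp add: power2_eq_square algebra_simps)
    ultimately show ?thesis by linarith
  qed
  ultimately have "(\<Sum>i=1..n. (p i - p' i)\<^sup>2 / 2 - (y i - y' i)\<^sup>2 / 2) \<le> 0"
    by (smt (verit) sum_mono)
  then show ?thesis unfolding p_def p'_def
    by (simp add: sum_subtractf sum_divide_distrib[symmetric])
qed

lemma abs_proj_convex_diff_le:
  assumes "i \<in> {1..n}"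
  shows "\<bar>proj_convex n y i - proj_convex n y' i\<bar> \<le> sqrt (\<Sum>j=1..n. (y j - y' j)\<^sup>2)"
proof -
  have "(proj_convex n y i - proj_convex n y' i)\<^sup>2 \<le> (\<Sum>j=1..n. (proj_convex n y j - proj_convex n y' j)\<^sup>2)"
    using assms by (intro member_le_sum) auto
  also have "\<dots> \<le> (\<Sum>j=1..n. (y j - y' j)\<^sup>2)" by (rule proj_convex_nonexpansive)
  finally show ?thesis by (metis real_sqrt_abs real_sqrt_le_mono)
qed

lemma continuous_on_proj_convex_coord: "continuous_on UNIV (\<lambda>y. proj_convex n y i)"
proof (cases "i \<in> {1..n}")
  case False
  then have "proj_convex n y i = undefined" for y
    using is_proj_convex_proj_convex[of n y] unfolding is_proj_convex_def by (meson extensional_arb)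
  then have "(\<lambda>y. proj_convex n y i) = (\<lambda>y. undefined)" by (rule ext)
  then show ?thesis by (simp only:) (rule continuous_on_const)
next
  case True
  show ?thesis
    unfolding continuous_on_eq_continuous_at[OF open_UNIV]
  proof
    fix y0 :: "nat \<Rightarrow> real"
    define h where "h y = sqrt (\<Sum>j=1..n. (y j - y0 j)\<^sup>2)" for y :: "nat \<Rightarrow> real"
    have "continuous_on UNIV h"
      unfolding h_def by (intro continuous_intros continuous_on_product_coordinates)
    then have "(h \<longlongrightarrow> h y0) (at y0)"
      using continuous_on_eq_continuous_at[OF open_UNIV] by (auto simp: isCont_def)
    then have h0: "(h \<longlongrightarrow> 0) (at y0)"
      unfolding h_def by simp
    have bound: "norm (proj_convex n y i - proj_convex n y0 i) \<le> h y" for y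
      unfolding h_def real_norm_def by (rule abs_proj_convex_diff_le[OF True])
    have "((\<lambda>y. proj_convex n y i - proj_convex n y0 i) \<longlongrightarrow> 0) (at y0)"
      by (rule Lim_null_comparison[OF always_eventually h0]) (use bound in blast)
    then show "isCont (\<lambda>y. proj_convex n y i) y0"
      by (simp add: isCont_def LIM_zero_iff)
  qed
qed

section \<open>Blocks between kinks\<close>

definition kinks :: "nat \<Rightarrow> (nat \<Rightarrow> real) \<Rightarrow> nat set" where
  "kinks n u = {i\<in>{2..n-1}. 2 * u i < u (i+1) + u (i-1)}"

lemma q_pieces_eq_card_kinks: "q_pieces n u = card (kinks n u) + 1"
  unfolding q_pieces_def kinks_def by simp

text \<open>A kink \<open>t \<in> T\<close> is the last index of its block.\<close>

definition block_index :: "nat set \<Rightarrow> nat \<Rightarrow> nat" where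
  "block_index T i = card {t\<in>T. t < i}"

definition block :: "nat \<Rightarrow> nat set \<Rightarrow> nat \<Rightarrow> nat set" where
  "block n T j = {i\<in>{1..n}. block_index T i = j}"

definition index_dev :: "nat set \<Rightarrow> nat \<Rightarrow> real" where
  "index_dev B i = real i - (\<Sum>k\<in>B. real k) / card B"

definition is_affine_on :: "nat set \<Rightarrow> (nat \<Rightarrow> real) \<Rightarrow> bool" where
  "is_affine_on B u \<longleftrightarrow> (\<exists>a b. \<forall>i\<in>B. u i = a + b * index_dev B i)"

definition blockwise_affine :: "nat \<Rightarrow> nat set \<Rightarrow> (nat \<Rightarrow> real) \<Rightarrow> bool" where
  "blockwise_affine n T u \<longleftrightarrow> (\<forall>j. is_affine_on (block n T j) u)"

lemma block_index_Suc:
  "finite T \<Longrightarrow> block_index T (Suc i) = block_index T i + (if i \<in> T then 1 else 0)"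
proof -
  assume "finite T"
  have "{t\<in>T. t < Suc i} = {t\<in>T. t < i} \<union> (if i \<in> T then {i} else {})"
    by (auto simp: less_Suc_eq)
  then show ?thesis unfolding block_index_def using \<open>finite T\<close> by (auto simp: card_insert_if)
qed

lemma block_index_mono: "finite T \<Longrightarrow> i \<le> j \<Longrightarrow> block_index T i \<le> block_index T j"
  unfolding block_index_def by (intro card_mono) auto

lemma block_index_le_card: "finite T \<Longrightarrow> block_index T i \<le> card T"
  unfolding block_index_def by (intro card_mono) auto

lemma finite_block [simp]: "finite (block n T j)"
  unfolding block_def by auto

lemma block_subset: "block n T j \<subseteq> {1..n}"
  unfolding block_def by auto

lemma disjoint_family_on_block: "disjoint_family_on (block n T) J"
  unfolding disjoint_family_on_def block_def by auto

lemma sum_over_blocks: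
  assumes "finite T"
  shows "(\<Sum>i=1..n. f i) = (\<Sum>j\<in>{0..card T}. \<Sum>i\<in>block n T j. f i)"
proof -
  have "block_index T ` {1..n} \<subseteq> {0..card T}"
    using block_index_le_card[OF assms] by auto
  then show ?thesis
    unfolding block_def by (intro sum.group[symmetric]) auto
qed

lemma sum_index_dev_eq_0: "finite B \<Longrightarrow> (\<Sum>i\<in>B. index_dev B i) = 0"
  by (cases "B = {}") (simp_all add: index_dev_def sum_subtractf)

lemma affine_between_kinks:
  assumes "finite T"
    and linear: "\<And>k. 2 \<le> k \<Longrightarrow> k+1 \<le> n \<Longrightarrow> k \<notin> T \<Longrightarrow> 2 * u k = u (k+1) + u (k-1)"
    and "1 \<le> i"
  shows "i \<le> j \<Longrightarrow> j \<le> n \<Longrightarrow> block_index T j = block_index T i \<Longrightarrow>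
    u j = u i + (real j - real i) * (u (i+1) - u i)"
proof (induction j rule: less_induct)
  case (less j)
  show ?case
  proof (cases "j \<le> i + 1")
    case True then show ?thesis using less.prems by (auto simp: le_Suc_eq)
  next
    case False
    have same: "block_index T (j-1) = block_index T i" "block_index T (j-2) = block_index T i"
      using block_index_mono[OF \<open>finite T\<close>, of i "j-1"] block_index_mono[OF \<open>finite T\<close>, of "j-1" j]
        block_index_mono[OF \<open>finite T\<close>, of i "j-2"] block_index_mono[OF \<open>finite T\<close>, of "j-2" j]
        less.prems False by auto
    then have "j - 1 \<notin> T"
      using block_index_Suc[OF \<open>finite T\<close>, of "j-1"] less.prems False by (auto split: if_splits)
    moreover have "j - 1 + 1 = j" "j - 1 - 1 = j - 2" using False by auto
    ultimately have e: "2 * u (j-1) = u j + u (j-2)"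
      using linear[of "j-1"] \<open>1 \<le> i\<close> less.prems False by simp
    have ih1: "u (j-1) = u i + (real (j-1) - real i) * (u (i+1) - u i)"
      using False less.prems same(1) by (intro less.IH) auto
    have ih2: "u (j-2) = u i + (real (j-2) - real i) * (u (i+1) - u i)"
      using False less.prems same(2) by (intro less.IH) auto
    have r: "real (j-1) = real j - 1" "real (j-2) = real j - 2" using False by auto
    show ?thesis using e ih1 ih2 unfolding r by (simp add: algebra_simps)
  qed
qed

lemma blockwise_affineI:
  assumes "finite T"
    and linear: "\<And>k. 2 \<le> k \<Longrightarrow> k+1 \<le> n \<Longrightarrow> k \<notin> T \<Longrightarrow> 2 * u k = u (k+1) + u (k-1)"
  shows "blockwise_affine n T u"
  unfolding blockwise_affine_def is_affine_on_def
proof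
  fix j
  define B where "B = block n T j"
  show "\<exists>a b. \<forall>i\<in>block n T j. u i = a + b * index_dev (block n T j) i"
  proof (cases "B = {}")
    case True then show ?thesis unfolding B_def by auto
  next
    case False
    define s where "s = Min B"
    have "s \<in> B" using Min_in[OF _ False] s_def B_def by simp
    define d where "d = u (s+1) - u s"
    have "u i = (u s - d * index_dev B s) + d * index_dev B i" if "i \<in> B" for i
    proof -
      have "s \<le> i" using Min_le[OF _ that] s_def B_def by simp
      then have "u i = u s + (real i - real s) * d"
        unfolding d_def using \<open>s \<in> B\<close> that
        by (intro affine_between_kinks[OF \<open>finite T\<close> linear]) (auto simp: B_def block_def)
      then show ?thesis by (simp add: index_dev_def algebra_simps)
    qed
    then show ?thesis unfolding B_def by blast
  qed
qed

lemma blockwise_affine_diff: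
  assumes "blockwise_affine n T u" "blockwise_affine n T v"
  shows "blockwise_affine n T (\<lambda>i. u i - v i)"
  unfolding blockwise_affine_def is_affine_on_def
proof
  fix j
  obtain a b a' b' where "\<forall>i\<in>block n T j. u i = a + b * index_dev (block n T j) i"
    "\<forall>i\<in>block n T j. v i = a' + b' * index_dev (block n T j) i"
    using assms unfolding blockwise_affine_def is_affine_on_def by meson
  then have "\<forall>i\<in>block n T j. u i - v i = (a - a') + (b - b') * index_dev (block n T j) i"
    by (simp add: algebra_simps)
  then show "\<exists>a b. \<forall>i\<in>block n T j. u i - v i = a + b * index_dev (block n T j) i" by blast
qed

lemma blockwise_affine_proj_convex:
  "blockwise_affine n (kinks n (proj_convex n y)) (proj_convex n y)"
proof (rule blockwise_affineI)
  show "finite (kinks n (proj_convex n y))" unfolding kinks_def by simp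
  fix k assume "2 \<le> k" "k+1 \<le> n" "k \<notin> kinks n (proj_convex n y)"
  then show "2 * proj_convex n y k = proj_convex n y (k+1) + proj_convex n y (k-1)"
    using proj_convex_in_convex_seqs[of n y] unfolding convex_seqs_def kinks_def by force
qed

section \<open>A deterministic bound by projections of the noise\<close>

text \<open>Squared norm of the projection of \<open>\<xi>|\<^bsub>A\<^esub>\<close> onto the line spanned by \<open>a|\<^bsub>A\<^esub>\<close>; zero if \<open>a\<close> vanishes on \<open>A\<close>.\<close>

definition line_proj_sq :: "nat set \<Rightarrow> (nat \<Rightarrow> real) \<Rightarrow> (nat \<Rightarrow> real) \<Rightarrow> real" where
  "line_proj_sq A a \<xi> = (\<Sum>i\<in>A. a i * \<xi> i)\<^sup>2 / (\<Sum>i\<in>A. (a i)\<^sup>2)"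

lemma line_proj_sq_nonneg: "0 \<le> line_proj_sq A a \<xi>"
  unfolding line_proj_sq_def by (simp add: sum_nonneg)

lemma abs_sum_mult_eq_line_proj_sq:
  assumes "finite A"
  shows "\<bar>\<Sum>i\<in>A. a i * \<xi> i\<bar> = sqrt (\<Sum>i\<in>A. (a i)\<^sup>2) * sqrt (line_proj_sq A a \<xi>)"
proof (cases "(\<Sum>i\<in>A. (a i)\<^sup>2) = 0")
  case True
  then have "\<forall>i\<in>A. a i = 0" using assms by (simp add: sum_nonneg_eq_0_iff)
  then show ?thesis using True by simp
next
  case False
  then have "0 < (\<Sum>i\<in>A. (a i)\<^sup>2)" by (simp add: order_less_le sum_nonneg)
  then show ?thesis
    unfolding line_proj_sq_def by (simp add: real_sqrt_mult[symmetric])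
qed

definition block_stat :: "nat \<Rightarrow> nat set \<Rightarrow> (nat \<Rightarrow> real) \<Rightarrow> real" where
  "block_stat n T \<xi> = (\<Sum>j\<in>{0..card T}.
     line_proj_sq (block n T j) (\<lambda>_. 1) \<xi> + line_proj_sq (block n T j) (index_dev (block n T j)) \<xi>)"

lemma block_stat_nonneg: "0 \<le> block_stat n T \<xi>"
  unfolding block_stat_def by (simp add: sum_nonneg line_proj_sq_nonneg)

lemma two_term_cauchy_schwarz:
  fixes x1 x2 y1 y2 :: real
  shows "x1 * y1 + x2 * y2 \<le> sqrt (x1\<^sup>2 + x2\<^sup>2) * sqrt (y1\<^sup>2 + y2\<^sup>2)"
proof -
  have "(x1 * y1 + x2 * y2)\<^sup>2 \<le> (x1\<^sup>2 + x2\<^sup>2) * (y1\<^sup>2 + y2\<^sup>2)"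
    using zero_le_power2[of "x1 * y2 - x2 * y1"] by (simp add: power2_eq_square algebra_simps)
  then show ?thesis by (simp add: real_le_rsqrt real_sqrt_mult[symmetric])
qed

text \<open>The constants and the centred indices are orthogonal on \<open>B\<close>, whence the two projections add up.\<close>
lemma affine_inner_le:
  assumes "finite B" "is_affine_on B u"
  shows "(\<Sum>i\<in>B. \<xi> i * u i) \<le> sqrt (\<Sum>i\<in>B. (u i)\<^sup>2) *
    sqrt (line_proj_sq B (\<lambda>_. 1) \<xi> + line_proj_sq B (index_dev B) \<xi>)"
proof -
  obtain a b where u: "\<forall>i\<in>B. u i = a + b * index_dev B i"
    using assms(2) unfolding is_affine_on_def by blast
  define X where "X = line_proj_sq B (\<lambda>_. 1) \<xi>"
  define Y where "Y = line_proj_sq B (index_dev B) \<xi>"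
  define k where "k = real (card B)"
  define V where "V = (\<Sum>i\<in>B. (index_dev B i)\<^sup>2)"
  have "0 \<le> V" unfolding V_def by (simp add: sum_nonneg)
  have S1: "\<bar>\<Sum>i\<in>B. \<xi> i\<bar> = sqrt k * sqrt X"
    using abs_sum_mult_eq_line_proj_sq[OF assms(1), of "\<lambda>_. 1" \<xi>] unfolding k_def X_def by simp
  have S2: "\<bar>\<Sum>i\<in>B. index_dev B i * \<xi> i\<bar> = sqrt V * sqrt Y"
    unfolding V_def Y_def by (rule abs_sum_mult_eq_line_proj_sq[OF assms(1)])
  have "(\<Sum>i\<in>B. \<xi> i * u i) = (\<Sum>i\<in>B. a * \<xi> i + b * (index_dev B i * \<xi> i))"
    using u by (intro sum.cong) (simp_all add: algebra_simps)
  also have "\<dots> = a * (\<Sum>i\<in>B. \<xi> i) + b * (\<Sum>i\<in>B. index_dev B i * \<xi> i)"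
    by (simp add: sum.distrib sum_distrib_left)
  also have "\<dots> \<le> \<bar>a\<bar> * \<bar>\<Sum>i\<in>B. \<xi> i\<bar> + \<bar>b\<bar> * \<bar>\<Sum>i\<in>B. index_dev B i * \<xi> i\<bar>"
    by (intro add_mono) (metis abs_ge_self abs_mult)+
  also have "\<dots> = (\<bar>a\<bar> * sqrt k) * sqrt X + (\<bar>b\<bar> * sqrt V) * sqrt Y"
    unfolding S1 S2 by (simp only: mult.assoc)
  also have "\<dots> \<le> sqrt (a\<^sup>2 * k + b\<^sup>2 * V) * sqrt (X + Y)"
    using two_term_cauchy_schwarz[of "\<bar>a\<bar> * sqrt k" "sqrt X" "\<bar>b\<bar> * sqrt V" "sqrt Y"] \<open>0 \<le> V\<close>
    by (simp add: power_mult_distrib k_def X_def Y_def line_proj_sq_nonneg)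
  also have "a\<^sup>2 * k + b\<^sup>2 * V = (\<Sum>i\<in>B. (u i)\<^sup>2)"
  proof -
    have "(\<Sum>i\<in>B. (u i)\<^sup>2) = (\<Sum>i\<in>B. a\<^sup>2 + (2 * a * b) * index_dev B i + b\<^sup>2 * (index_dev B i)\<^sup>2)"
      using u by (intro sum.cong) (simp_all add: power2_eq_square algebra_simps)
    also have "\<dots> = a\<^sup>2 * k + (2 * a * b) * (\<Sum>i\<in>B. index_dev B i) + b\<^sup>2 * V"
      unfolding k_def V_def by (simp add: sum.distrib sum_distrib_left)
    finally show ?thesis using sum_index_dev_eq_0[OF assms(1)] by simp
  qed
  finally show ?thesis unfolding X_def Y_def .
qed

lemma blockwise_affine_inner_le:
  assumes "finite T" "blockwise_affine n T u"
  shows "(\<Sum>i=1..n. \<xi> i * u i) \<le> sqrt (\<Sum>i=1..n. (u i)\<^sup>2) * sqrt (block_stat n T \<xi>)"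
proof -
  define A where "A j = (\<Sum>i\<in>block n T j. (u i)\<^sup>2)" for j
  define C where "C j = line_proj_sq (block n T j) (\<lambda>_. 1) \<xi>
    + line_proj_sq (block n T j) (index_dev (block n T j)) \<xi>" for j
  have "0 \<le> A j" "0 \<le> C j" for j
    unfolding A_def C_def by (simp_all add: sum_nonneg line_proj_sq_nonneg)
  have "(\<Sum>i=1..n. \<xi> i * u i) = (\<Sum>j\<in>{0..card T}. \<Sum>i\<in>block n T j. \<xi> i * u i)"
    by (rule sum_over_blocks[OF assms(1)])
  also have "\<dots> \<le> (\<Sum>j\<in>{0..card T}. \<bar>sqrt (A j)\<bar> * \<bar>sqrt (C j)\<bar>)"
    using affine_inner_le assms(2) \<open>\<And>j. 0 \<le> A j\<close> \<open>\<And>j. 0 \<le> C j\<close>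
    unfolding A_def C_def blockwise_affine_def by (intro sum_mono) simp
  also have "\<dots> \<le> L2_set (\<lambda>j. sqrt (A j)) {0..card T} * L2_set (\<lambda>j. sqrt (C j)) {0..card T}"
    by (rule L2_set_mult_ineq)
  also have "\<dots> = sqrt (\<Sum>i=1..n. (u i)\<^sup>2) * sqrt (block_stat n T \<xi>)"
    using \<open>\<And>j. 0 \<le> A j\<close> \<open>\<And>j. 0 \<le> C j\<close> sum_over_blocks[OF assms(1), of "\<lambda>i. (u i)\<^sup>2" n]
    unfolding L2_set_def A_def C_def block_stat_def by simp
  finally show ?thesis .
qed

text \<open>The least squares fit of \<open>\<mu>\<close> on \<open>B\<close> by an affine function of the index.\<close>

definition affine_fit :: "nat set \<Rightarrow> (nat \<Rightarrow> real) \<Rightarrow> nat \<Rightarrow> real" where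
  "affine_fit B \<mu> i = (\<Sum>k\<in>B. \<mu> k) / card B
     + (\<Sum>k\<in>B. index_dev B k * \<mu> k) / (\<Sum>k\<in>B. (index_dev B k)\<^sup>2) * index_dev B i"

definition blockwise_fit :: "nat \<Rightarrow> nat set \<Rightarrow> (nat \<Rightarrow> real) \<Rightarrow> nat \<Rightarrow> real" where
  "blockwise_fit n T \<mu> i = affine_fit (block n T (block_index T i)) \<mu> i"

lemma affine_fit_orthogonal:
  assumes "finite B" "is_affine_on B u"
  shows "(\<Sum>i\<in>B. (\<mu> i - affine_fit B \<mu> i) * u i) = 0"
proof -
  obtain a b where u: "\<forall>i\<in>B. u i = a + b * index_dev B i"
    using assms(2) unfolding is_affine_on_def by blast
  define V where "V = (\<Sum>k\<in>B. (index_dev B k)\<^sup>2)"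
  define M where "M = (\<Sum>k\<in>B. \<mu> k) / card B"
  define c where "c = (\<Sum>k\<in>B. index_dev B k * \<mu> k) / V"
  have fit: "affine_fit B \<mu> i = M + c * index_dev B i" for i
    unfolding affine_fit_def M_def c_def V_def ..
  have dev: "(\<Sum>i\<in>B. index_dev B i) = 0" by (rule sum_index_dev_eq_0[OF assms(1)])
  have "(\<Sum>i\<in>B. affine_fit B \<mu> i) = card B * M + c * (\<Sum>i\<in>B. index_dev B i)"
    by (simp add: fit sum.distrib sum_distrib_left)
  then have const: "(\<Sum>i\<in>B. affine_fit B \<mu> i) = (\<Sum>i\<in>B. \<mu> i)"
    using dev assms(1) by (cases "B = {}") (simp_all add: M_def)
  have "c * V = (\<Sum>i\<in>B. index_dev B i * \<mu> i)"
  proof (cases "V = 0")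
    case True
    then have "\<forall>i\<in>B. index_dev B i = 0" using assms(1) by (simp add: V_def sum_nonneg_eq_0_iff)
    then show ?thesis using True by simp
  next
    case False then show ?thesis by (simp add: c_def)
  qed
  moreover have "(\<Sum>i\<in>B. affine_fit B \<mu> i * index_dev B i)
      = M * (\<Sum>i\<in>B. index_dev B i) + c * V"
    unfolding V_def by (simp add: fit sum.distrib sum_distrib_left algebra_simps power2_eq_square)
  ultimately have slope: "(\<Sum>i\<in>B. affine_fit B \<mu> i * index_dev B i) = (\<Sum>i\<in>B. index_dev B i * \<mu> i)"
    using dev by simp
  have "(\<Sum>i\<in>B. (\<mu> i - affine_fit B \<mu> i) * u i) = (\<Sum>i\<in>B.
      a * (\<mu> i - affine_fit B \<mu> i) + b * (index_dev B i * \<mu> i - affine_fit B \<mu> i * index_dev B i))"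
    using u by (intro sum.cong) (simp_all add: algebra_simps)
  also have "\<dots> = a * ((\<Sum>i\<in>B. \<mu> i) - (\<Sum>i\<in>B. affine_fit B \<mu> i))
      + b * ((\<Sum>i\<in>B. index_dev B i * \<mu> i) - (\<Sum>i\<in>B. affine_fit B \<mu> i * index_dev B i))"
    by (simp add: sum.distrib sum_subtractf sum_distrib_left right_diff_distrib)
  finally show ?thesis using const slope by simp
qed

lemma blockwise_fit_on_block: "i \<in> block n T j \<Longrightarrow> blockwise_fit n T \<mu> i = affine_fit (block n T j) \<mu> i"
  unfolding blockwise_fit_def block_def by auto

lemma blockwise_affine_blockwise_fit: "blockwise_affine n T (blockwise_fit n T \<mu>)"
  unfolding blockwise_affine_def is_affine_on_def
proof (intro allI exI ballI)
  fix j i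
  let ?B = "block n T j"
  assume "i \<in> ?B"
  then show "blockwise_fit n T \<mu> i = (\<Sum>k\<in>?B. \<mu> k) / card ?B
      + (\<Sum>k\<in>?B. index_dev ?B k * \<mu> k) / (\<Sum>k\<in>?B. (index_dev ?B k)\<^sup>2) * index_dev ?B i"
    by (simp add: blockwise_fit_on_block affine_fit_def)
qed

lemma blockwise_fit_orthogonal:
  assumes "finite T" "blockwise_affine n T u"
  shows "(\<Sum>i=1..n. (\<mu> i - blockwise_fit n T \<mu> i) * u i) = 0"
  unfolding sum_over_blocks[OF assms(1)]
proof (rule sum.neutral, rule ballI)
  fix j
  have "(\<Sum>i\<in>block n T j. (\<mu> i - blockwise_fit n T \<mu> i) * u i)
      = (\<Sum>i\<in>block n T j. (\<mu> i - affine_fit (block n T j) \<mu> i) * u i)"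
    by (simp add: blockwise_fit_on_block)
  also have "\<dots> = 0"
    using assms(2) unfolding blockwise_affine_def by (intro affine_fit_orthogonal) auto
  finally show "(\<Sum>i\<in>block n T j. (\<mu> i - blockwise_fit n T \<mu> i) * u i) = 0" .
qed

definition residual_stat :: "nat \<Rightarrow> nat set \<Rightarrow> (nat \<Rightarrow> real) \<Rightarrow> (nat \<Rightarrow> real) \<Rightarrow> real" where
  "residual_stat n T \<mu> \<xi> = line_proj_sq {1..n} (\<lambda>i. \<mu> i - blockwise_fit n T \<mu> i) \<xi>"

lemma proj_convex_basic_ineq:
  fixes \<xi> :: "nat \<Rightarrow> real"
  assumes "\<mu> \<in> convex_seqs n"
  defines "p \<equiv> proj_convex n (\<lambda>i. \<mu> i + \<xi> i)"
  shows "(\<Sum>i=1..n. (p i - \<mu> i)\<^sup>2) \<le> (\<Sum>i=1..n. \<xi> i * (p i - \<mu> i))"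
proof -
  have "(\<Sum>i=1..n. ((\<mu> i + \<xi> i) - p i) * (\<mu> i - p i)) \<le> 0"
    unfolding p_def by (rule proj_convex_variational_ineq[OF assms(1)])
  moreover have "((\<mu> i + \<xi> i) - p i) * (\<mu> i - p i) = (p i - \<mu> i)\<^sup>2 - \<xi> i * (p i - \<mu> i)" for i
    by (simp add: power2_eq_square algebra_simps)
  ultimately show ?thesis by (simp add: sum_subtractf)
qed

lemma le_add_of_le_sqrt_mult_add:
  fixes D1 D2 Q R :: real
  assumes "0 \<le> D1" "0 \<le> D2" "0 \<le> Q" "0 \<le> R"
    and "D1 + D2 \<le> sqrt D1 * sqrt Q + sqrt D2 * sqrt R"
  shows "D1 + D2 \<le> Q + R"
proof -
  have "D1 + D2 \<le> sqrt (D1 + D2) * sqrt (Q + R)"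
    using assms two_term_cauchy_schwarz[of "sqrt D1" "sqrt Q" "sqrt D2" "sqrt R"] by simp
  then have "sqrt (D1 + D2) \<le> sqrt (Q + R)" if "0 < D1 + D2"
    using that
    by (metis abs_of_nonneg less_imp_le mult_le_cancel_left_pos real_sqrt_gt_0_iff real_sqrt_mult_self)
  then show ?thesis using assms by (cases "D1 + D2 = 0") auto
qed

theorem proj_convex_error_le_stats:
  fixes \<xi> :: "nat \<Rightarrow> real"
  assumes "\<mu> \<in> convex_seqs n"
  defines "p \<equiv> proj_convex n (\<lambda>i. \<mu> i + \<xi> i)"
  defines "T \<equiv> kinks n p"
  shows "(\<Sum>i=1..n. (p i - \<mu> i)\<^sup>2) \<le> block_stat n T \<xi> + residual_stat n T \<mu> \<xi>"
proof -
  have "finite T" unfolding T_def kinks_def by simp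
  define m where "m = blockwise_fit n T \<mu>"
  define D1 where "D1 = (\<Sum>i=1..n. (p i - m i)\<^sup>2)"
  define D2 where "D2 = (\<Sum>i=1..n. (\<mu> i - m i)\<^sup>2)"
  have affine: "blockwise_affine n T (\<lambda>i. p i - m i)"
    unfolding T_def m_def p_def
    by (intro blockwise_affine_diff blockwise_affine_proj_convex blockwise_affine_blockwise_fit)
  have "(\<Sum>i=1..n. (\<mu> i - m i) * (p i - m i)) = 0"
    unfolding m_def by (rule blockwise_fit_orthogonal[OF \<open>finite T\<close> affine[unfolded m_def]])
  moreover have "(p i - \<mu> i)\<^sup>2 = (p i - m i)\<^sup>2 + (\<mu> i - m i)\<^sup>2 - 2 * ((\<mu> i - m i) * (p i - m i))" for i
    by (simp add: power2_eq_square algebra_simps)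
  ultimately have pythagoras: "(\<Sum>i=1..n. (p i - \<mu> i)\<^sup>2) = D1 + D2"
    unfolding D1_def D2_def by (simp add: sum.distrib sum_subtractf sum_distrib_left[symmetric])
  have "(\<Sum>i=1..n. \<xi> i * (p i - \<mu> i)) = (\<Sum>i=1..n. \<xi> i * (p i - m i)) - (\<Sum>i=1..n. (\<mu> i - m i) * \<xi> i)"
    unfolding sum_subtractf[symmetric] by (rule sum.cong) (simp_all add: algebra_simps)
  moreover have "D1 + D2 \<le> (\<Sum>i=1..n. \<xi> i * (p i - \<mu> i))"
    unfolding pythagoras[symmetric] p_def by (rule proj_convex_basic_ineq[OF assms(1)])
  ultimately have "D1 + D2 \<le> (\<Sum>i=1..n. \<xi> i * (p i - m i)) - (\<Sum>i=1..n. (\<mu> i - m i) * \<xi> i)"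
    by linarith
  also have "\<dots> \<le> sqrt D1 * sqrt (block_stat n T \<xi>) + sqrt D2 * sqrt (residual_stat n T \<mu> \<xi>)"
  proof -
    have "\<bar>\<Sum>i=1..n. (\<mu> i - m i) * \<xi> i\<bar> = sqrt D2 * sqrt (residual_stat n T \<mu> \<xi>)"
      unfolding D2_def residual_stat_def m_def by (rule abs_sum_mult_eq_line_proj_sq) simp
    then have "- (\<Sum>i=1..n. (\<mu> i - m i) * \<xi> i) \<le> sqrt D2 * sqrt (residual_stat n T \<mu> \<xi>)"
      by (metis abs_ge_minus_self)
    then show ?thesis
      using blockwise_affine_inner_le[OF \<open>finite T\<close> affine, of \<xi>] unfolding D1_def by linarith
  qed
  finally have "D1 + D2 \<le> block_stat n T \<xi> + residual_stat n T \<mu> \<xi>"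
    by (rule le_add_of_le_sqrt_mult_add[rotated 4])
      (simp_all add: D1_def D2_def sum_nonneg block_stat_nonneg residual_stat_def line_proj_sq_nonneg)
  then show ?thesis unfolding pythagoras .
qed

section \<open>Moment generating functions of Gaussian projections\<close>

lemma nn_integral_normal_exp_sq:
  fixes \<tau> c :: real
  assumes "0 < \<tau>" "2 * c * \<tau>\<^sup>2 < 1"
  shows "(\<integral>\<^sup>+x. ennreal (normal_density 0 \<tau> x) * ennreal (exp (c * x\<^sup>2)) \<partial>lborel)
    = ennreal (1 / sqrt (1 - 2 * c * \<tau>\<^sup>2))"
proof -
  define r where "r = sqrt (1 - 2 * c * \<tau>\<^sup>2)"
  have "0 < r" "r\<^sup>2 = 1 - 2 * c * \<tau>\<^sup>2" unfolding r_def using assms by simp_all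
  define \<tau>' where "\<tau>' = \<tau> / r"
  have "0 < \<tau>'" unfolding \<tau>'_def using assms \<open>0 < r\<close> by simp
  text \<open>Multiplying the density by \<open>exp (c x\<^sup>2)\<close> rescales the variance to \<open>\<tau>\<^sup>2 / r\<^sup>2\<close>.\<close>
  have density: "normal_density 0 \<tau> x * exp (c * x\<^sup>2) = (1 / r) * normal_density 0 \<tau>' x" for x
  proof -
    have "- (x\<^sup>2) / (2 * \<tau>\<^sup>2) + c * x\<^sup>2 = - (x\<^sup>2) * r\<^sup>2 / (2 * \<tau>\<^sup>2)"
      using assms(1) unfolding \<open>r\<^sup>2 = 1 - 2 * c * \<tau>\<^sup>2\<close> by (simp add: field_simps)
    also have "\<dots> = - (x\<^sup>2) / (2 * \<tau>'\<^sup>2)"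
      unfolding \<tau>'_def using assms(1) \<open>0 < r\<close> by (simp add: field_simps power_divide)
    finally have "exp (- (x\<^sup>2) / (2 * \<tau>\<^sup>2)) * exp (c * x\<^sup>2) = exp (- (x\<^sup>2) / (2 * \<tau>'\<^sup>2))"
      by (simp add: mult_exp_exp)
    moreover have "sqrt (2 * pi * \<tau>\<^sup>2) = sqrt (2 * pi) * \<tau>" "sqrt (2 * pi * \<tau>'\<^sup>2) = sqrt (2 * pi) * \<tau>'"
      using assms(1) \<open>0 < \<tau>'\<close> by (simp_all add: real_sqrt_mult)
    ultimately show ?thesis
      unfolding normal_density_def \<tau>'_def using assms(1) \<open>0 < r\<close> by (simp add: field_simps)
  qed
  have "(\<integral>\<^sup>+x. ennreal (normal_density 0 \<tau> x) * ennreal (exp (c * x\<^sup>2)) \<partial>lborel)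
      = (\<integral>\<^sup>+x. ennreal (1 / r) * ennreal (normal_density 0 \<tau>' x) \<partial>lborel)"
    using \<open>0 < r\<close> by (intro nn_integral_cong)
      (simp add: density normal_density_nonneg flip: ennreal_mult)
  also have "\<dots> = ennreal (1 / r) * (\<integral>\<^sup>+x. ennreal (normal_density 0 \<tau>' x) \<partial>lborel)"
    by (rule nn_integral_cmult) simp
  also have "(\<integral>\<^sup>+x. ennreal (normal_density 0 \<tau>' x) \<partial>lborel) = 1"
    using \<open>0 < \<tau>'\<close> by (subst nn_integral_eq_integral) (auto simp: normal_density_nonneg)
  finally show ?thesis unfolding r_def by simp
qed

lemma prob_space_gauss_vec: "0 < \<sigma> \<Longrightarrow> prob_space (gauss_vec n \<sigma>)"
  unfolding gauss_vec_def by (intro prob_space_PiM prob_space_normal_density)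

lemma sets_gauss_vec: "sets (gauss_vec n \<sigma>) = sets (PiM {1..n} (\<lambda>_. borel))"
  unfolding gauss_vec_def by (intro sets_PiM_cong) auto

lemma space_gauss_vec: "space (gauss_vec n \<sigma>) = PiE {1..n} (\<lambda>_. UNIV)"
  unfolding gauss_vec_def by (simp add: space_PiM)

lemma borel_measurable_gauss_vec_coord [measurable]: "(\<lambda>\<xi>. \<xi> i) \<in> borel_measurable (gauss_vec n \<sigma>)"
proof (cases "i \<in> {1..n}")
  case True
  then have "(\<lambda>\<xi>. \<xi> i) \<in> borel_measurable (PiM {1..n} (\<lambda>_. borel))"
    by (rule measurable_component_singleton)
  then show ?thesis using sets_gauss_vec measurable_cong_sets by blast
next
  case False
  then have "\<xi> i = undefined" if "\<xi> \<in> space (gauss_vec n \<sigma>)" for \<xi>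
    using that unfolding space_gauss_vec by (auto simp: PiE_iff extensional_def)
  then show ?thesis using measurable_cong[of "gauss_vec n \<sigma>" "\<lambda>\<xi>. \<xi> i" "\<lambda>\<xi>. undefined"] by simp
qed

lemma distr_gauss_vec_coord:
  assumes "0 < \<sigma>" "i \<in> {1..n}" "sets M = sets borel"
  shows "distr (gauss_vec n \<sigma>) M (\<lambda>\<xi>. \<xi> i) = density lborel (normal_density 0 \<sigma>)"
proof -
  have "distr (gauss_vec n \<sigma>) M (\<lambda>\<xi>. \<xi> i) = distr (gauss_vec n \<sigma>) (density lborel (normal_density 0 \<sigma>)) (\<lambda>\<xi>. \<xi> i)"
    using assms(3) by (intro distr_cong) auto
  also have "\<dots> = density lborel (normal_density 0 \<sigma>)"
    unfolding gauss_vec_def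
    by (rule distr_PiM_component) (use assms prob_space_normal_density in auto)
  finally show ?thesis .
qed

lemma distributed_gauss_vec_coord:
  assumes "0 < \<sigma>" "i \<in> {1..n}"
  shows "distributed (gauss_vec n \<sigma>) lborel (\<lambda>\<xi>. \<xi> i) (\<lambda>x. ennreal (normal_density 0 \<sigma> x))"
  unfolding distributed_def
  using distr_gauss_vec_coord[OF assms, of lborel] measurable_cong_sets[OF refl sets_lborel]
    borel_measurable_gauss_vec_coord
  by auto

lemma indep_vars_gauss_vec_coords:
  assumes "0 < \<sigma>" "1 \<le> n"
  shows "prob_space.indep_vars (gauss_vec n \<sigma>) (\<lambda>_. borel) (\<lambda>i \<xi>. \<xi> i) {1..n}"
proof -
  interpret prob_space "gauss_vec n \<sigma>" using prob_space_gauss_vec[OF assms(1)] .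
  have "distr (gauss_vec n \<sigma>) borel (\<lambda>\<xi>. \<xi> i) = density lborel (normal_density 0 \<sigma>)"
    if "i \<in> {1..n}" for i
    using distr_gauss_vec_coord[OF assms(1) that] by simp
  then have coords: "gauss_vec n \<sigma> = PiM {1..n} (\<lambda>i. distr (gauss_vec n \<sigma>) borel (\<lambda>\<xi>. \<xi> i))"
    by (subst (1) gauss_vec_def) (auto intro!: PiM_cong)
  have "distr (gauss_vec n \<sigma>) (PiM {1..n} (\<lambda>_. borel)) (\<lambda>\<xi>. \<lambda>i\<in>{1..n}. \<xi> i)
      = distr (gauss_vec n \<sigma>) (gauss_vec n \<sigma>) (\<lambda>\<xi>. \<xi>)"
    by (intro distr_cong) (auto simp: sets_gauss_vec space_gauss_vec)
  also have "\<dots> = PiM {1..n} (\<lambda>i. distr (gauss_vec n \<sigma>) borel (\<lambda>\<xi>. \<xi> i))"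
    unfolding distr_id by (rule coords)
  finally show ?thesis
    using assms(2) by (subst indep_vars_iff_distr_eq_PiM') auto
qed

lemma line_proj_sq_nonzero_coeffs:
  assumes "finite J"
  shows "line_proj_sq J a \<xi> = line_proj_sq {i\<in>J. a i \<noteq> 0} a \<xi>"
proof -
  have drop: "(\<Sum>i\<in>J. f i) = (\<Sum>i\<in>{i\<in>J. a i \<noteq> 0}. f i)" if "\<And>i. a i = 0 \<Longrightarrow> f i = 0"
    for f :: "nat \<Rightarrow> real"
    using assms that by (intro sum.mono_neutral_right) auto
  show ?thesis
    unfolding line_proj_sq_def using drop[of "\<lambda>i. a i * \<xi> i"] drop[of "\<lambda>i. (a i)\<^sup>2"] by simp
qed

lemma distributed_sum_mult_gauss_vec:
  assumes "0 < \<sigma>" "1 \<le> n" "J \<subseteq> {1..n}" "J \<noteq> {}" "\<forall>i\<in>J. a i \<noteq> 0"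
  shows "distributed (gauss_vec n \<sigma>) lborel (\<lambda>\<xi>. \<Sum>i\<in>J. a i * \<xi> i)
    (normal_density 0 (sqrt (\<Sum>i\<in>J. (\<bar>a i\<bar> * \<sigma>)\<^sup>2)))"
proof -
  interpret prob_space "gauss_vec n \<sigma>" using prob_space_gauss_vec[OF assms(1)] .
  have "finite J" using assms(3) finite_subset by blast
  have indep: "indep_vars (\<lambda>_. borel) (\<lambda>i \<xi>. a i * \<xi> i) J"
    using indep_vars_subset[OF indep_vars_gauss_vec_coords[OF assms(1,2)] assms(3)]
    by (rule indep_vars_compose2[where Y="\<lambda>i x. a i * x" and N="\<lambda>_. borel", simplified]) simp
  have distr: "distributed (gauss_vec n \<sigma>) lborel (\<lambda>\<xi>. a i * \<xi> i) (normal_density 0 (\<bar>a i\<bar> * \<sigma>))"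
    if "i \<in> J" for i
  proof -
    have "a i \<noteq> 0" "i \<in> {1..n}" using that assms(3,5) by auto
    from normal_density_affine[OF distributed_gauss_vec_coord[OF assms(1) \<open>i \<in> {1..n}\<close>] assms(1)
        \<open>a i \<noteq> 0\<close>, of 0]
    show ?thesis by simp
  qed
  have "distributed (gauss_vec n \<sigma>) lborel (\<lambda>\<xi>. \<Sum>i\<in>J. a i * \<xi> i)
      (normal_density (\<Sum>i\<in>J. 0) (sqrt (\<Sum>i\<in>J. (\<bar>a i\<bar> * \<sigma>)\<^sup>2)))"
    by (rule sum_indep_normal[OF \<open>finite J\<close> assms(4) indep]) (use distr assms(1,5) in auto)
  then show ?thesis by simp
qed

text \<open>\<open>line_proj_sq J a\<close> is \<open>\<sigma>\<^sup>2\<close> times a \<open>\<chi>\<^sup>2\<close> variable with one degree of freedom.\<close>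
lemma nn_integral_exp_line_proj_sq:
  assumes "0 < \<sigma>" "1 \<le> n" "J \<subseteq> {1..n}" "J \<noteq> {}" "\<forall>i\<in>J. a i \<noteq> 0" "2 * \<theta> * \<sigma>\<^sup>2 < 1"
  shows "(\<integral>\<^sup>+\<xi>. ennreal (exp (\<theta> * line_proj_sq J a \<xi>)) \<partial>gauss_vec n \<sigma>)
    = ennreal (1 / sqrt (1 - 2 * \<theta> * \<sigma>\<^sup>2))"
proof -
  define S where "S = (\<Sum>i\<in>J. (a i)\<^sup>2)"
  define \<tau> where "\<tau> = sqrt (\<Sum>i\<in>J. (\<bar>a i\<bar> * \<sigma>)\<^sup>2)"
  have "finite J" using assms(3) finite_subset by blast
  then have "0 < S"
    unfolding S_def using assms(4,5) by (intro sum_pos) auto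
  have "\<tau>\<^sup>2 = \<sigma>\<^sup>2 * S"
    unfolding \<tau>_def S_def by (simp add: power_mult_distrib sum_distrib_left sum_nonneg mult.commute)
  then have "0 < \<tau>" using \<open>0 < S\<close> assms(1) unfolding \<tau>_def by (simp add: sum_nonneg)
  have "(\<integral>\<^sup>+\<xi>. ennreal (exp (\<theta> * line_proj_sq J a \<xi>)) \<partial>gauss_vec n \<sigma>)
      = (\<integral>\<^sup>+\<xi>. ennreal (exp ((\<theta> / S) * (\<Sum>i\<in>J. a i * \<xi> i)\<^sup>2)) \<partial>gauss_vec n \<sigma>)"
    by (simp add: line_proj_sq_def S_def)
  also have "\<dots> = (\<integral>\<^sup>+x. ennreal (normal_density 0 \<tau> x) * ennreal (exp ((\<theta> / S) * x\<^sup>2)) \<partial>lborel)"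
    using distributed_nn_integral[OF distributed_sum_mult_gauss_vec[OF assms(1-5)],
        of "\<lambda>x. ennreal (exp ((\<theta> / S) * x\<^sup>2))"]
    by (simp add: \<tau>_def)
  also have "\<dots> = ennreal (1 / sqrt (1 - 2 * (\<theta> / S) * \<tau>\<^sup>2))"
    by (rule nn_integral_normal_exp_sq[OF \<open>0 < \<tau>\<close>])
      (use \<open>\<tau>\<^sup>2 = \<sigma>\<^sup>2 * S\<close> \<open>0 < S\<close> assms(6) in \<open>simp add: field_simps\<close>)
  also have "2 * (\<theta> / S) * \<tau>\<^sup>2 = 2 * \<theta> * \<sigma>\<^sup>2"
    using \<open>\<tau>\<^sup>2 = \<sigma>\<^sup>2 * S\<close> \<open>0 < S\<close> by (simp add: field_simps)
  finally show ?thesis .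
qed

lemma nn_integral_exp_line_proj_sq_le:
  assumes "0 < \<sigma>" "1 \<le> n" "J \<subseteq> {1..n}" "0 \<le> \<theta>" "2 * \<theta> * \<sigma>\<^sup>2 < 1"
  shows "(\<integral>\<^sup>+\<xi>. ennreal (exp (\<theta> * line_proj_sq J a \<xi>)) \<partial>gauss_vec n \<sigma>)
    \<le> ennreal (1 / sqrt (1 - 2 * \<theta> * \<sigma>\<^sup>2))"
proof -
  interpret prob_space "gauss_vec n \<sigma>" using prob_space_gauss_vec[OF assms(1)] .
  define J' where "J' = {i\<in>J. a i \<noteq> 0}"
  have "finite J" using assms(3) finite_subset by blast
  have proj: "line_proj_sq J a \<xi> = line_proj_sq J' a \<xi>" for \<xi>
    unfolding J'_def by (rule line_proj_sq_nonzero_coeffs[OF \<open>finite J\<close>])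
  show ?thesis
  proof (cases "J' = {}")
    case True
    have "line_proj_sq J a \<xi> = 0" for \<xi>
      using proj[of \<xi>] unfolding True line_proj_sq_def by simp
    moreover have "1 \<le> 1 / sqrt (1 - 2 * \<theta> * \<sigma>\<^sup>2)"
      using assms(4,5) by (simp add: field_simps zero_le_mult_iff)
    ultimately show ?thesis by (simp add: emeasure_space_1)
  next
    case False
    have "J' \<subseteq> {1..n}" "\<forall>i\<in>J'. a i \<noteq> 0" using assms(3) unfolding J'_def by auto
    then show ?thesis
      unfolding proj using nn_integral_exp_line_proj_sq[OF assms(1,2) _ False _ assms(5)] by simp
  qed
qed

text \<open>By convexity of \<open>exp\<close>, bounds on \<open>E exp (2\<theta>U)\<close> and \<open>E exp (2\<theta>V)\<close> bound \<open>E exp (\<theta>(U + V))\<close>, whatever the dependence.\<close>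
lemma nn_integral_exp_add_le:
  assumes [measurable]: "U \<in> borel_measurable M" "V \<in> borel_measurable M"
    and "(\<integral>\<^sup>+x. ennreal (exp (2 * \<theta> * U x)) \<partial>M) \<le> ennreal c"
    and "(\<integral>\<^sup>+x. ennreal (exp (2 * \<theta> * V x)) \<partial>M) \<le> ennreal c"
  shows "(\<integral>\<^sup>+x. ennreal (exp (\<theta> * (U x + V x))) \<partial>M) \<le> ennreal c"
proof -
  have "ennreal (exp (\<theta> * (U x + V x)))
      \<le> ennreal (1/2) * ennreal (exp (2 * \<theta> * U x)) + ennreal (1/2) * ennreal (exp (2 * \<theta> * V x))" for x
  proof -
    have "exp (\<theta> * (U x + V x)) \<le> (1/2) * exp (2 * \<theta> * U x) + (1/2) * exp (2 * \<theta> * V x)"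
      using convex_onD[OF exp_convex, of "1/2" "2 * \<theta> * U x" "2 * \<theta> * V x"]
      by (simp add: algebra_simps)
    then have "ennreal (exp (\<theta> * (U x + V x)))
        \<le> ennreal ((1/2) * exp (2 * \<theta> * U x) + (1/2) * exp (2 * \<theta> * V x))"
      by (rule ennreal_leI)
    also have "\<dots> = ennreal (1/2) * ennreal (exp (2 * \<theta> * U x)) + ennreal (1/2) * ennreal (exp (2 * \<theta> * V x))"
      using ennreal_mult[of "1/2" "exp (2 * \<theta> * U x)"] ennreal_mult[of "1/2" "exp (2 * \<theta> * V x)"]
      by (subst ennreal_plus) simp_all
    finally show ?thesis .
  qed
  then have "(\<integral>\<^sup>+x. ennreal (exp (\<theta> * (U x + V x))) \<partial>M)
      \<le> (\<integral>\<^sup>+x. ennreal (1/2) * ennreal (exp (2 * \<theta> * U x)) + ennreal (1/2) * ennreal (exp (2 * \<theta> * V x)) \<partial>M)"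
    by (intro nn_integral_mono)
  also have "\<dots> = ennreal (1/2) * (\<integral>\<^sup>+x. ennreal (exp (2 * \<theta> * U x)) \<partial>M)
      + ennreal (1/2) * (\<integral>\<^sup>+x. ennreal (exp (2 * \<theta> * V x)) \<partial>M)"
    by (simp add: nn_integral_add nn_integral_cmult)
  also have "\<dots> \<le> ennreal (1/2) * ennreal c + ennreal (1/2) * ennreal c"
    using assms(3,4) by (intro add_mono mult_left_mono) auto
  also have "\<dots> = (ennreal (1/2) + ennreal (1/2)) * ennreal c"
    by (simp add: distrib_right)
  also have "ennreal (1/2) + ennreal (1/2) = ennreal 1"
    by (subst ennreal_plus[symmetric]) auto
  finally show ?thesis by simp
qed

lemma borel_measurable_line_proj_sq [measurable]:
  "(\<lambda>\<xi>. line_proj_sq A a \<xi>) \<in> borel_measurable (gauss_vec n \<sigma>)"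
  unfolding line_proj_sq_def by measurable

lemma borel_measurable_block_stat [measurable]:
  "(\<lambda>\<xi>. block_stat m T \<xi>) \<in> borel_measurable (gauss_vec n \<sigma>)"
  unfolding block_stat_def by measurable

lemma borel_measurable_residual_stat [measurable]:
  "(\<lambda>\<xi>. residual_stat m T \<mu> \<xi>) \<in> borel_measurable (gauss_vec n \<sigma>)"
  unfolding residual_stat_def by measurable

lemma borel_measurable_line_proj_sq_PiM [measurable]:
  "(\<lambda>f. line_proj_sq B a f) \<in> borel_measurable (PiM B (\<lambda>_. borel))"
proof -
  have "(\<lambda>f::nat\<Rightarrow>real. f i) \<in> borel_measurable (PiM B (\<lambda>_. borel))" if "i \<in> B" for i
    using that by (rule measurable_component_singleton)
  then have "(\<lambda>f. \<Sum>i\<in>B. a i * f i) \<in> borel_measurable (PiM B (\<lambda>_. borel))"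
    using borel_measurable_sum[of B "\<lambda>i f. a i * f i" "PiM B (\<lambda>_. borel)"] by simp
  then show ?thesis unfolding line_proj_sq_def by measurable
qed

lemma line_proj_sq_restrict [simp]: "line_proj_sq A a (restrict \<xi> A) = line_proj_sq A a \<xi>"
  unfolding line_proj_sq_def by simp

lemma nn_integral_exp_block_le:
  assumes "0 < \<sigma>" "1 \<le> n" "B \<subseteq> {1..n}" "0 \<le> \<theta>" "4 * \<theta> * \<sigma>\<^sup>2 < 1"
  shows "(\<integral>\<^sup>+\<xi>. ennreal (exp (\<theta> * (line_proj_sq B (\<lambda>_. 1) \<xi> + line_proj_sq B (index_dev B) \<xi>)))
    \<partial>gauss_vec n \<sigma>) \<le> ennreal (1 / sqrt (1 - 4 * \<theta> * \<sigma>\<^sup>2))"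
  using nn_integral_exp_line_proj_sq_le[OF assms(1-3), of "2 * \<theta>"] assms(4,5)
  by (intro nn_integral_exp_add_le) (simp_all add: mult.assoc)

lemma nn_integral_prod_blocks_gauss_vec:
  assumes "0 < \<sigma>" "1 \<le> n" "finite J" "\<And>j. j \<in> J \<Longrightarrow> K j \<subseteq> {1..n}" "disjoint_family_on K J"
    and measurable: "\<And>j. j \<in> J \<Longrightarrow> g j \<in> borel_measurable (PiM (K j) (\<lambda>_. borel))"
    and nonneg: "\<And>j f. 0 \<le> g j f"
  shows "(\<integral>\<^sup>+\<xi>. ennreal (\<Prod>j\<in>J. g j (restrict \<xi> (K j))) \<partial>gauss_vec n \<sigma>)
    = (\<Prod>j\<in>J. \<integral>\<^sup>+\<xi>. ennreal (g j (restrict \<xi> (K j))) \<partial>gauss_vec n \<sigma>)"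
proof -
  interpret prob_space "gauss_vec n \<sigma>" using prob_space_gauss_vec[OF assms(1)] .
  have "indep_vars (\<lambda>j. PiM (K j) (\<lambda>_. borel)) (\<lambda>j \<xi>. restrict (\<lambda>i. \<xi> i) (K j)) J"
    by (rule indep_vars_restrict[OF indep_vars_gauss_vec_coords[OF assms(1,2)] assms(4,5)])
  then have "indep_vars (\<lambda>_. borel) (\<lambda>j \<xi>. g j (restrict (\<lambda>i. \<xi> i) (K j))) J"
    by (rule indep_vars_compose2) (rule measurable)
  then have "indep_vars (\<lambda>_. borel) (\<lambda>j \<xi>. ennreal (g j (restrict \<xi> (K j)))) J"
    by (rule indep_vars_compose2[where Y="\<lambda>j x. ennreal x" and N="\<lambda>_. borel", simplified]) simp
  then have "(\<integral>\<^sup>+\<xi>. (\<Prod>j\<in>J. ennreal (g j (restrict \<xi> (K j)))) \<partial>gauss_vec n \<sigma>)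
      = (\<Prod>j\<in>J. \<integral>\<^sup>+\<xi>. ennreal (g j (restrict \<xi> (K j))) \<partial>gauss_vec n \<sigma>)"
    by (rule indep_vars_nn_integral[OF assms(3)]) simp
  then show ?thesis by (simp add: prod_ennreal nonneg)
qed

text \<open>
  The \<open>|T| + 1\<close> blocks are independent and each contributes at most \<open>\<surd>5\<close>: by convexity it
  suffices that \<open>E exp (2Z / (5\<sigma>\<^sup>2)) = \<surd>5\<close> for \<open>Z = \<sigma>\<^sup>2\<chi>\<^sup>2\<^sub>1\<close>.
\<close>
lemma nn_integral_exp_block_stat_le:
  assumes "0 < \<sigma>" "1 \<le> n" "finite T"
  shows "(\<integral>\<^sup>+\<xi>. ennreal (exp (block_stat n T \<xi> / (5 * \<sigma>\<^sup>2))) \<partial>gauss_vec n \<sigma>)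
    \<le> ennreal (sqrt 5 ^ (card T + 1))"
proof -
  define c where "c = 1 / (5 * \<sigma>\<^sup>2)"
  define g where "g j f = exp (c * (line_proj_sq (block n T j) (\<lambda>_. 1) f
    + line_proj_sq (block n T j) (index_dev (block n T j)) f))" for j f
  have "g j \<in> borel_measurable (PiM (block n T j) (\<lambda>_. borel))" for j
    unfolding g_def by measurable
  have "(\<integral>\<^sup>+\<xi>. ennreal (exp (block_stat n T \<xi> / (5 * \<sigma>\<^sup>2))) \<partial>gauss_vec n \<sigma>)
      = (\<integral>\<^sup>+\<xi>. ennreal (\<Prod>j\<in>{0..card T}. g j (restrict \<xi> (block n T j))) \<partial>gauss_vec n \<sigma>)"
    unfolding block_stat_def g_def c_def
    by (simp add: sum_distrib_left exp_sum sum_divide_distrib)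
  also have "\<dots> = (\<Prod>j\<in>{0..card T}. \<integral>\<^sup>+\<xi>. ennreal (g j (restrict \<xi> (block n T j))) \<partial>gauss_vec n \<sigma>)"
    using assms(1,2) block_subset disjoint_family_on_block
      \<open>\<And>j. g j \<in> borel_measurable (PiM (block n T j) (\<lambda>_. borel))\<close>
    by (intro nn_integral_prod_blocks_gauss_vec) (auto simp: g_def)
  also have "\<dots> \<le> (\<Prod>j\<in>{0..card T}. ennreal (sqrt 5))"
  proof (rule prod_mono_ennreal)
    fix j
    have "(\<integral>\<^sup>+\<xi>. ennreal (g j (restrict \<xi> (block n T j))) \<partial>gauss_vec n \<sigma>)
        \<le> ennreal (1 / sqrt (1 - 4 * c * \<sigma>\<^sup>2))"
      unfolding g_def line_proj_sq_restrict
      by (rule nn_integral_exp_block_le[OF assms(1,2) block_subset]) (use assms(1) in \<open>simp_all add: c_def\<close>)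
    also have "1 / sqrt (1 - 4 * c * \<sigma>\<^sup>2) = sqrt 5"
      using assms(1) unfolding c_def by (simp add: real_sqrt_divide)
    finally show "(\<integral>\<^sup>+\<xi>. ennreal (g j (restrict \<xi> (block n T j))) \<partial>gauss_vec n \<sigma>) \<le> ennreal (sqrt 5)" .
  qed
  also have "\<dots> = ennreal (sqrt 5) ^ (card T + 1)"
    by simp
  also have "\<dots> = ennreal (sqrt 5 ^ (card T + 1))"
    by (rule ennreal_power) simp
  finally show ?thesis .
qed

lemma nn_integral_exp_residual_stat_le:
  assumes "0 < \<sigma>" "1 \<le> n"
  shows "(\<integral>\<^sup>+\<xi>. ennreal (exp (residual_stat n T \<mu> \<xi> / (5 * \<sigma>\<^sup>2))) \<partial>gauss_vec n \<sigma>)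
    \<le> ennreal (sqrt 5 ^ (card T + 1))"
proof -
  have "(\<integral>\<^sup>+\<xi>. ennreal (exp (residual_stat n T \<mu> \<xi> / (5 * \<sigma>\<^sup>2))) \<partial>gauss_vec n \<sigma>)
      \<le> ennreal (1 / sqrt (1 - 2 * (1 / (5 * \<sigma>\<^sup>2)) * \<sigma>\<^sup>2))"
    using nn_integral_exp_line_proj_sq_le[OF assms order_refl, of "1 / (5 * \<sigma>\<^sup>2)"] assms(1)
    unfolding residual_stat_def by simp
  also have "1 / sqrt (1 - 2 * (1 / (5 * \<sigma>\<^sup>2)) * \<sigma>\<^sup>2) = sqrt (5 / 3)"
    using assms(1) by (simp add: real_sqrt_divide)
  also have "sqrt (5 / 3) \<le> sqrt 5 ^ (card T + 1)"
    by (rule order_trans[of _ "sqrt 5"]) (simp_all add: self_le_power)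
  finally show ?thesis by (simp add: ennreal_leI order_trans)
qed

lemma emeasure_stats_ge_le:
  assumes "0 < \<sigma>" "1 \<le> n" "finite T"
  shows "emeasure (gauss_vec n \<sigma>)
      {\<xi>\<in>space (gauss_vec n \<sigma>). \<sigma>\<^sup>2 * real (card T + 1) * L \<le> block_stat n T \<xi> + residual_stat n T \<mu> \<xi>}
    \<le> ennreal (sqrt 5 ^ (card T + 1) * exp (- (real (card T + 1) * L / 10)))"
proof -
  let ?M = "gauss_vec n \<sigma>" and ?x = "\<sigma>\<^sup>2 * real (card T + 1) * L"
  let ?S = "\<lambda>\<xi>. block_stat n T \<xi> + residual_stat n T \<mu> \<xi>"
  define s where "s = 1 / (10 * \<sigma>\<^sup>2)"
  have "0 < s" unfolding s_def using assms(1) by simp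
  have "(\<integral>\<^sup>+\<xi>. ennreal (exp (s * ?S \<xi>)) * indicator (space ?M) \<xi> \<partial>?M)
      = (\<integral>\<^sup>+\<xi>. ennreal (exp (s * ?S \<xi>)) \<partial>?M)"
    by (intro nn_integral_cong) simp
  also have "\<dots> \<le> ennreal (sqrt 5 ^ (card T + 1))"
    using nn_integral_exp_block_stat_le[OF assms] nn_integral_exp_residual_stat_le[OF assms(1,2)]
    by (intro nn_integral_exp_add_le) (simp_all add: s_def)
  finally have mgf: "(\<integral>\<^sup>+\<xi>. ennreal (exp (s * ?S \<xi>)) * indicator (space ?M) \<xi> \<partial>?M)
    \<le> ennreal (sqrt 5 ^ (card T + 1))" .
  have "emeasure ?M {\<xi>\<in>space ?M. ?x \<le> ?S \<xi>}
      \<le> ennreal (exp (- s * ?x)) * (\<integral>\<^sup>+\<xi>. ennreal (exp (s * ?S \<xi>)) * indicator (space ?M) \<xi> \<partial>?M)"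
    using \<open>0 < s\<close> by (intro Chernoff_ineq_nn_integral_ge) auto
  also have "\<dots> \<le> ennreal (exp (- s * ?x)) * ennreal (sqrt 5 ^ (card T + 1))"
    using mgf by (rule mult_left_mono) simp
  also have "- s * ?x = - (real (card T + 1) * L / 10)"
    unfolding s_def using assms(1) by (simp add: field_simps)
  finally show ?thesis
    by (simp add: mult.commute flip: ennreal_mult)
qed

section \<open>The union bound over kink sets\<close>

lemma sum_Pow_power_card:
  fixes x :: "'a::comm_semiring_1"
  shows "finite S \<Longrightarrow> (\<Sum>T\<in>Pow S. x ^ card T) = (1 + x) ^ card S"
  using prod_add[of S "\<lambda>_. x" "\<lambda>_. 1"] by (simp add: add.commute)

lemma exp_half_le_two: "exp (1/2::real) \<le> 2"
proof -
  have "exp (1/2::real) ^ 2 = exp 1" by (simp flip: exp_of_nat_mult)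
  also have "\<dots> \<le> 2 ^ 2" using exp_le by simp
  finally show ?thesis by (rule power2_le_imp_le) simp
qed

lemma sqrt_5_mult_exp_neg_2_le: "sqrt 5 * exp (-2) \<le> (1/2::real)"
proof -
  have "(3/2::real) ^ 4 \<le> exp (1/2) ^ 4"
    using exp_ge_add_one_self[of "1/2::real"] by (intro power_mono) auto
  also have "exp (1/2::real) ^ 4 = exp 2" by (simp flip: exp_of_nat_mult)
  finally have "81/16 \<le> exp (2::real)" by (simp add: power_divide)
  moreover have "sqrt 5 \<le> (81/32::real)"
    by (rule real_le_lsqrt) (simp_all add: power2_eq_square)
  ultimately show ?thesis by (simp add: exp_minus field_simps)
qed

lemma mult_one_plus_power_le_one:
  fixes z :: real
  assumes "0 \<le> z" "z \<le> 1/2" "real m * z \<le> 1/2"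
  shows "z * (1 + z) ^ m \<le> 1"
proof -
  have "(1 + z) ^ m \<le> exp z ^ m"
    using assms(1) exp_ge_add_one_self[of z] by (intro power_mono) auto
  also have "\<dots> = exp (real m * z)" by (simp flip: exp_of_nat_mult)
  also have "\<dots> \<le> 2"
    using assms(3) exp_half_le_two by (meson exp_le_cancel_iff order_trans)
  finally have "(1 + z) ^ m \<le> 2" .
  then have "z * (1 + z) ^ m \<le> 1/2 * 2"
    using assms(1,2) by (intro mult_mono) simp_all
  then show ?thesis by simp
qed

lemma exp_neg_risk_const_div_10:
  assumes "1 \<le> n" "0 < \<alpha>"
  shows "exp (- ((20 + 40 * ln (real n) + 10 * ln (1 / \<alpha>)) / 10)) = exp (-2) / real n ^ 4 * \<alpha>"
proof -
  have "- ((20 + 40 * ln (real n) + 10 * ln (1 / \<alpha>)) / 10) = -2 - 4 * ln (real n) - ln (1 / \<alpha>)"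
    by (simp add: field_simps)
  then have "exp (- ((20 + 40 * ln (real n) + 10 * ln (1 / \<alpha>)) / 10))
      = exp (-2) / exp (4 * ln (real n)) / exp (ln (1 / \<alpha>))"
    by (simp add: exp_diff)
  moreover have "exp (4 * ln (real n)) = real n ^ 4"
    using exp_of_nat_mult[of 4 "ln (real n)"] assms(1) by simp
  ultimately show ?thesis using assms(2) by simp
qed

text \<open>With \<open>z = \<surd>5 e\<^sup>-\<^sup>2 / n\<^sup>4\<close> the term of a kink set \<open>T\<close> equals \<open>(\<alpha> z)\<^bsup>|T|+1\<^esup>\<close>.\<close>
lemma sum_kink_sets_le:
  assumes "1 \<le> n" "0 < \<alpha>" "\<alpha> < 1"
  defines "L \<equiv> 20 + 40 * ln (real n) + 10 * ln (1 / \<alpha>)"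
  shows "(\<Sum>T\<in>Pow {2..n-1}. sqrt 5 ^ (card T + 1) * exp (- (real (card T + 1) * L / 10))) \<le> \<alpha>"
proof -
  define z where "z = sqrt 5 * exp (-2) / real n ^ 4"
  have "0 \<le> z" unfolding z_def by simp
  have exp_L: "exp (- (L / 10)) = exp (-2) / real n ^ 4 * \<alpha>"
    unfolding L_def by (rule exp_neg_risk_const_div_10[OF assms(1,2)])
  have summand_le: "sqrt 5 ^ (card T + 1) * exp (- (real (card T + 1) * L / 10)) \<le> \<alpha> * z ^ (card T + 1)"
    for T
  proof -
    have "sqrt 5 ^ (card T + 1) * exp (- (real (card T + 1) * L / 10))
        = sqrt 5 ^ (card T + 1) * exp (- (L / 10)) ^ (card T + 1)"
      unfolding exp_of_nat_mult[symmetric] by simp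
    also have "\<dots> = (sqrt 5 * exp (- (L / 10))) ^ (card T + 1)"
      by (rule power_mult_distrib[symmetric])
    also have "sqrt 5 * exp (- (L / 10)) = \<alpha> * z"
      unfolding exp_L z_def by simp
    also have "(\<alpha> * z) ^ (card T + 1) = \<alpha> ^ (card T + 1) * z ^ (card T + 1)"
      by (rule power_mult_distrib)
    also have "\<dots> \<le> \<alpha> * z ^ (card T + 1)"
      using assms(2,3) \<open>0 \<le> z\<close> by (intro mult_right_mono) (simp_all add: mult_left_le power_le_one)
    finally show ?thesis .
  qed
  have "z \<le> 1 / (2 * real n)"
  proof -
    have "z \<le> (1/2) / real n ^ 4"
      unfolding z_def using sqrt_5_mult_exp_neg_2_le by (intro divide_right_mono) auto
    also have "\<dots> \<le> (1/2) / real n"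
      using assms(1) by (intro divide_left_mono) (auto simp: self_le_power)
    finally show ?thesis by simp
  qed
  then have "real n * z \<le> 1/2"
    using assms(1) by (simp add: field_simps)
  moreover have "z \<le> real n * z" "real (card {2..n-1}) * z \<le> real n * z"
    using assms(1) \<open>0 \<le> z\<close> mult_right_mono[of 1 "real n" z] by (auto intro: mult_right_mono)
  ultimately have "z * (1 + z) ^ card {2..n-1} \<le> 1"
    using \<open>0 \<le> z\<close> by (intro mult_one_plus_power_le_one) auto
  have "(\<Sum>T\<in>Pow {2..n-1}. sqrt 5 ^ (card T + 1) * exp (- (real (card T + 1) * L / 10)))
      \<le> (\<Sum>T\<in>Pow {2..n-1}. \<alpha> * z * z ^ card T)"
    using summand_le by (intro sum_mono) (simp add: mult.assoc)
  also have "\<dots> = \<alpha> * (z * (1 + z) ^ card {2..n-1})"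
    by (simp add: sum_distrib_left[symmetric] sum_Pow_power_card mult.assoc)
  also have "\<dots> \<le> \<alpha>"
    using \<open>z * (1 + z) ^ card {2..n-1} \<le> 1\<close> assms(2) by (simp add: mult_left_le)
  finally show ?thesis .
qed

lemma borel_measurable_proj_convex_coord [measurable]:
  "(\<lambda>\<xi>. proj_convex n (\<lambda>i. \<mu> i + \<xi> i) k) \<in> borel_measurable (gauss_vec m \<sigma>)"
proof -
  have "(\<lambda>\<xi>. \<lambda>i. \<mu> i + \<xi> i) \<in> measurable (gauss_vec m \<sigma>) (borel :: (nat \<Rightarrow> real) measure)"
    by (rule measurable_coordinatewise_then_product) simp
  moreover have "(\<lambda>y. proj_convex n y k) \<in> borel_measurable (borel :: (nat \<Rightarrow> real) measure)"
    by (rule borel_measurable_continuous_onI[OF continuous_on_proj_convex_coord])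
  ultimately show ?thesis by (rule measurable_compose)
qed

lemma borel_measurable_q_pieces_proj_convex [measurable]:
  "(\<lambda>\<xi>. real (q_pieces n (proj_convex n (\<lambda>i. \<mu> i + \<xi> i)))) \<in> borel_measurable (gauss_vec m \<sigma>)"
proof -
  have "real (q_pieces n u) = 1 + (\<Sum>i\<in>{2..n-1}. if 2 * u i < u (i+1) + u (i-1) then 1 else 0)" for u
    unfolding q_pieces_def by (simp add: sum.If_cases Int_def)
  then show ?thesis by simp
qed

lemma proj_convex_error_event_subset:
  assumes "\<mu> \<in> convex_seqs n"
  shows "{\<xi>\<in>A. \<not> (\<Sum>i=1..n. (proj_convex n (\<lambda>i. \<mu> i + \<xi> i) i - \<mu> i)\<^sup>2)
      \<le> \<sigma>\<^sup>2 * real (q_pieces n (proj_convex n (\<lambda>i. \<mu> i + \<xi> i))) * L}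
    \<subseteq> (\<Union>T\<in>Pow {2..n-1}.
      {\<xi>\<in>A. \<sigma>\<^sup>2 * real (card T + 1) * L \<le> block_stat n T \<xi> + residual_stat n T \<mu> \<xi>})"
proof
  fix \<xi> assume \<xi>: "\<xi> \<in> {\<xi>\<in>A. \<not> (\<Sum>i=1..n. (proj_convex n (\<lambda>i. \<mu> i + \<xi> i) i - \<mu> i)\<^sup>2)
      \<le> \<sigma>\<^sup>2 * real (q_pieces n (proj_convex n (\<lambda>i. \<mu> i + \<xi> i))) * L}"
  let ?T = "kinks n (proj_convex n (\<lambda>i. \<mu> i + \<xi> i))"
  have "?T \<in> Pow {2..n-1}" unfolding kinks_def by auto
  then show "\<xi> \<in> (\<Union>T\<in>Pow {2..n-1}.
      {\<xi>\<in>A. \<sigma>\<^sup>2 * real (card T + 1) * L \<le> block_stat n T \<xi> + residual_stat n T \<mu> \<xi>})"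
    using \<xi> proj_convex_error_le_stats[OF assms, of \<xi>] q_pieces_eq_card_kinks
    by (auto intro!: bexI[of _ ?T])
qed

lemma measure_kink_stat_events_le:
  assumes "0 < \<sigma>" "1 \<le> n" "0 < \<alpha>" "\<alpha> < 1"
  defines "L \<equiv> 20 + 40 * ln (real n) + 10 * ln (1 / \<alpha>)"
  shows "measure (gauss_vec n \<sigma>) (\<Union>T\<in>Pow {2..n-1}. {\<xi>\<in>space (gauss_vec n \<sigma>).
      \<sigma>\<^sup>2 * real (card T + 1) * L \<le> block_stat n T \<xi> + residual_stat n T \<mu> \<xi>}) \<le> \<alpha>"
proof -
  interpret prob_space "gauss_vec n \<sigma>" using prob_space_gauss_vec[OF assms(1)] .
  let ?E = "\<lambda>T. {\<xi>\<in>space (gauss_vec n \<sigma>). \<sigma>\<^sup>2 * real (card T + 1) * L \<le> block_stat n T \<xi> + residual_stat n T \<mu> \<xi>}"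
  have "prob (\<Union>T\<in>Pow {2..n-1}. ?E T) \<le> (\<Sum>T\<in>Pow {2..n-1}. prob (?E T))"
    by (rule finite_measure_subadditive_finite) auto
  also have "\<dots> \<le> (\<Sum>T\<in>Pow {2..n-1}. sqrt 5 ^ (card T + 1) * exp (- (real (card T + 1) * L / 10)))"
  proof (rule sum_mono)
    fix T assume "T \<in> Pow {2..n-1}"
    then have "finite T" by (meson PowD finite_atLeastAtMost finite_subset)
    from emeasure_stats_ge_le[OF assms(1,2) this, of L \<mu>]
    show "prob (?E T) \<le> sqrt 5 ^ (card T + 1) * exp (- (real (card T + 1) * L / 10))"
      by (simp add: emeasure_eq_measure)
  qed
  also have "\<dots> \<le> \<alpha>"
    unfolding L_def by (rule sum_kink_sets_le[OF assms(2-4)])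
  finally show ?thesis .
qed

theorem mainTheorem7:
  fixes n :: nat and \<sigma> \<alpha> :: real and \<mu> :: "nat \<Rightarrow> real"
  assumes "n \<ge> 1" and "\<sigma> > 0" and "0 < \<alpha>" and "\<alpha> < 1"
    and "\<mu> \<in> convex_seqs n"
  shows "measure (gauss_vec n \<sigma>)
      {\<xi> \<in> space (gauss_vec n \<sigma>).
         (let y = (\<lambda>i. \<mu> i + \<xi> i);
              \<mu>h = proj_convex n y;
              r = \<sigma>^2 * real (q_pieces n \<mu>h) * (20 + 40 * ln (real n) + 10 * ln (1 / \<alpha>)) / real n
          in (1 / real n) * (\<Sum>i=1..n. (\<mu>h i - \<mu> i)^2) \<le> r)}
    \<ge> 1 - \<alpha>"
proof -
  let ?M = "gauss_vec n \<sigma>" and ?p = "\<lambda>\<xi>. proj_convex n (\<lambda>i. \<mu> i + \<xi> i)"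
  interpret prob_space ?M using prob_space_gauss_vec[OF assms(2)] .
  define L where "L = 20 + 40 * ln (real n) + 10 * ln (1 / \<alpha>)"
  define good where "good = {\<xi>\<in>space ?M. (\<Sum>i=1..n. (?p \<xi> i - \<mu> i)\<^sup>2) \<le> \<sigma>\<^sup>2 * real (q_pieces n (?p \<xi>)) * L}"
  let ?bad = "\<Union>T\<in>Pow {2..n-1}.
    {\<xi>\<in>space ?M. \<sigma>\<^sup>2 * real (card T + 1) * L \<le> block_stat n T \<xi> + residual_stat n T \<mu> \<xi>}"
  have "good \<in> events" unfolding good_def by measurable
  have "prob (space ?M - good) \<le> prob ?bad"
    using proj_convex_error_event_subset[OF assms(5), of "space ?M" \<sigma> L]
    by (intro finite_measure_mono) (auto simp: good_def)
  also have "\<dots> \<le> \<alpha>"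
    unfolding L_def by (rule measure_kink_stat_events_le[OF assms(2,1,3,4)])
  finally have "1 - \<alpha> \<le> prob good"
    using prob_compl[OF \<open>good \<in> events\<close>] by simp
  moreover have "(1 / real n) * S \<le> X / real n \<longleftrightarrow> S \<le> X" for S X :: real
    using assms(1) by (simp add: field_simps)
  ultimately show ?thesis
    unfolding good_def L_def Let_def by simp
qed

end
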